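(* Fix an integer $k\ge2$. For each $3$-element subset $A=\{a,b,c\}$ of $\{0,1,\dots,k\}$ with $a<b<c$, let $\rho_A$ be the polymatroid on a $2$-element set $\{e,f\}$ given by $\rho_A(\emptyset)=0$, $\rho_A(\{e\})=b$, $\rho_A(\{f\})=c$, $\rho_A(\{e,f\})=a+c$. Then a $k$-polymatroid is an excluded minor for $\mathcal{Q}_k$ within the class of $k$-polymatroids (i.e., it is not in $\mathcal{Q}_k$ but all of its proper minors are) if and only if it is isomorphic to $\rho_A$ for some such $A$; thus $\mathcal{Q}_k$ has exactly $\binom{k+1}{3}$ excluded minors within the class of $k$-polymatroids.
   Context: A polymatroid on a finite set $E$ is a function $\rho:2^E\to\mathbb{Z}$ that is normalized, non-decreasing and submodular; it is a $k$-polymatroid if $\rho(\{e\})\le k$ for all $e$. For matroids $Q,L$ on $E$, $Q$ is a quotient of $L$ if there is a matroid $M$ and $A\subseteq E(M)$ with $L=M\backslash A$ and $Q=M/A$ (equivalently, $r_L-r_Q$ is non-decreasing). $\mathcal{Q}_k$ is the class of polymatroids of the form $r_{M_1}+\cdots+r_{M_k}$ where each $M_{i+1}$ ($i\in[k-1]$) is a quotient of (possibly equal to) $M_i$. Minors: $\rho_{\backslash A}(X)=\rho(X)$, $\rho_{/A}(X)=\rho(X\cup A)-\rho(A)$ for $X\subseteq E-A$; minors are $(\rho_{\backslash A})_{/B}$ for disjoint $A,B$, proper if $A\cup B\ne\emptyset$. Polymatroids are isomorphic if a bijection of ground sets preserves the rank function. *)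

theory Defs
  imports Main
begin

definition polymatroid :: "'a set \<Rightarrow> ('a set \<Rightarrow> int) \<Rightarrow> bool" where
  "polymatroid E \<rho> \<longleftrightarrow> finite E \<and> \<rho> {} = 0
     \<and> (\<forall>X Y. X \<subseteq> Y \<and> Y \<subseteq> E \<longrightarrow> \<rho> X \<le> \<rho> Y)
     \<and> (\<forall>X Y. X \<subseteq> E \<and> Y \<subseteq> E \<longrightarrow> \<rho> (X \<union> Y) + \<rho> (X \<inter> Y) \<le> \<rho> X + \<rho> Y)"

definition k_polymatroid :: "nat \<Rightarrow> 'a set \<Rightarrow> ('a set \<Rightarrow> int) \<Rightarrow> bool" where
  "k_polymatroid k E \<rho> \<longleftrightarrow> polymatroid E \<rho> \<and> (\<forall>e\<in>E. \<rho> {e} \<le> int k)"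

definition matroid_rank :: "'a set \<Rightarrow> ('a set \<Rightarrow> int) \<Rightarrow> bool" where
  "matroid_rank E r \<longleftrightarrow> finite E
     \<and> (\<forall>X. X \<subseteq> E \<longrightarrow> 0 \<le> r X \<and> r X \<le> int (card X))
     \<and> (\<forall>X Y. X \<subseteq> Y \<and> Y \<subseteq> E \<longrightarrow> r X \<le> r Y)
     \<and> (\<forall>X Y. X \<subseteq> E \<and> Y \<subseteq> E \<longrightarrow> r (X \<union> Y) + r (X \<inter> Y) \<le> r X + r Y)"

text \<open>Q is a quotient of L (both matroids on E): there is a matroid M on
  E plus extra elements A (encoded as Inr ` A, A a finite set of naturals, the
  elements of E being encoded as Inl ` E) with L = M \ A and Q = M / A.\<close>
definition quotient :: "'a set \<Rightarrow> ('a set \<Rightarrow> int) \<Rightarrow> ('a set \<Rightarrow> int) \<Rightarrow> bool" where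
  "quotient E rQ rL \<longleftrightarrow> matroid_rank E rQ \<and> matroid_rank E rL \<and>
     (\<exists>(A :: nat set) (rM :: ('a + nat) set \<Rightarrow> int).
        finite A \<and> matroid_rank (Inl ` E \<union> Inr ` A) rM
        \<and> (\<forall>X. X \<subseteq> E \<longrightarrow> rL X = rM (Inl ` X))
        \<and> (\<forall>X. X \<subseteq> E \<longrightarrow> rQ X = rM (Inl ` X \<union> Inr ` A) - rM (Inr ` A)))"

definition in_Qk :: "nat \<Rightarrow> 'a set \<Rightarrow> ('a set \<Rightarrow> int) \<Rightarrow> bool" where
  "in_Qk k E \<rho> \<longleftrightarrow> (\<exists>M :: nat \<Rightarrow> ('a set \<Rightarrow> int).
      (\<forall>i\<in>{1..k}. matroid_rank E (M i))
      \<and> (\<forall>i\<in>{1..k-1}. quotient E (M (Suc i)) (M i))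
      \<and> (\<forall>X. X \<subseteq> E \<longrightarrow> \<rho> X = (\<Sum>i=1..k. M i X)))"

text \<open>The minor (rho \ A) / B, a polymatroid on E - (A \<union> B).\<close>
definition minor_rank :: "('a set \<Rightarrow> int) \<Rightarrow> 'a set \<Rightarrow> 'a set \<Rightarrow> int" where
  "minor_rank \<rho> B X = \<rho> (X \<union> B) - \<rho> B"

definition excluded_minor_Qk :: "nat \<Rightarrow> 'a set \<Rightarrow> ('a set \<Rightarrow> int) \<Rightarrow> bool" where
  "excluded_minor_Qk k E \<rho> \<longleftrightarrow> k_polymatroid k E \<rho> \<and> \<not> in_Qk k E \<rho>
     \<and> (\<forall>A B. A \<subseteq> E \<and> B \<subseteq> E \<and> A \<inter> B = {} \<and> A \<union> B \<noteq> {}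
            \<longrightarrow> in_Qk k (E - (A \<union> B)) (minor_rank \<rho> B))"

definition poly_iso :: "'a set \<Rightarrow> ('a set \<Rightarrow> int) \<Rightarrow> 'b set \<Rightarrow> ('b set \<Rightarrow> int) \<Rightarrow> bool" where
  "poly_iso E \<rho> E' \<rho>' \<longleftrightarrow> (\<exists>\<phi>. bij_betw \<phi> E E' \<and> (\<forall>X. X \<subseteq> E \<longrightarrow> \<rho> X = \<rho>' (\<phi> ` X)))"

text \<open>rho_A on the ground set {e, f} = UNIV :: bool set, with e = True, f = False.\<close>
definition rhoA :: "nat \<Rightarrow> nat \<Rightarrow> nat \<Rightarrow> bool set \<Rightarrow> int" where
  "rhoA a b c X = (if X = {} then 0 else if X = {True} then int b
                   else if X = {False} then int c else int a + int c)"

end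

theory Submission
  imports Defs
begin

text \<open>A k-polymatroid lies in Q_k exactly when, for every set B and elements e, f outside B with
  rho(B + e) different from rho(B + f), the pair {e, f} is modular over B.
  Necessity: along a chain of quotients the marginal ranks of e and f over B only decrease, so a layer
  where the pair is not modular (both marginals 1, the pair parallel) forces equal marginals of e and f
  in every layer, hence rho(B + e) = rho(B + f).
  Sufficiency: the condition makes the number of elements of X with marginal rank at least i independent
  of the order in which X is built up; for i = 1, ..., k these counts are the rank functions of a chain
  of quotients summing to rho.
  An excluded minor therefore violates the condition at some B, e, f, and minimality forces B = {} and
  E = {e, f}; such two-element polymatroids are exactly the rho_A. Conversely rho_A violates the condition,
  while every proper minor of it has at most one element and satisfies it vacuously.\<close>

section \<open>Polymatroids and matroids\<close>

lemma polymatroidD: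
  assumes "polymatroid E \<rho>"
  shows "finite E" "\<rho> {} = 0"
    "\<And>X Y. X \<subseteq> Y \<Longrightarrow> Y \<subseteq> E \<Longrightarrow> \<rho> X \<le> \<rho> Y"
    "\<And>X Y. X \<subseteq> E \<Longrightarrow> Y \<subseteq> E \<Longrightarrow> \<rho> (X \<union> Y) + \<rho> (X \<inter> Y) \<le> \<rho> X + \<rho> Y"
  using assms unfolding polymatroid_def by blast+

lemma k_polymatroidI:
  assumes "finite E" "\<rho> {} = 0" "\<And>X Y. X \<subseteq> Y \<Longrightarrow> Y \<subseteq> E \<Longrightarrow> \<rho> X \<le> \<rho> Y"
    "\<And>X Y. X \<subseteq> E \<Longrightarrow> Y \<subseteq> E \<Longrightarrow> \<rho> (X \<union> Y) + \<rho> (X \<inter> Y) \<le> \<rho> X + \<rho> Y"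
    "\<And>e. e \<in> E \<Longrightarrow> \<rho> {e} \<le> int k"
  shows "k_polymatroid k E \<rho>"
  unfolding k_polymatroid_def polymatroid_def using assms(1,2,5) by (auto intro: assms(3,4))

lemma polymatroid_insert_diminishing:
  assumes "polymatroid E \<rho>" "X \<subseteq> Y" "Y \<subseteq> E" "x \<in> E" "x \<notin> Y"
  shows "\<rho> (insert x Y) - \<rho> Y \<le> \<rho> (insert x X) - \<rho> X"
proof -
  have "\<rho> (insert x X \<union> Y) + \<rho> (insert x X \<inter> Y) \<le> \<rho> (insert x X) + \<rho> Y"
    using assms by (intro polymatroidD(4)) auto
  moreover have "insert x X \<union> Y = insert x Y" "insert x X \<inter> Y = X"
    using assms by auto
  ultimately show ?thesis by simp
qed

lemma k_polymatroid_minor_rank: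
  assumes "k_polymatroid k E \<rho>" "B \<subseteq> E" "E' \<subseteq> E - B"
  shows "k_polymatroid k E' (minor_rank \<rho> B)"
proof (rule k_polymatroidI)
  have P: "polymatroid E \<rho>" and k: "\<And>e. e \<in> E \<Longrightarrow> \<rho> {e} \<le> int k"
    using assms(1) unfolding k_polymatroid_def by auto
  note pP = polymatroidD[OF P]
  show "finite E'"
    using assms(3) finite_subset pP(1) by blast
  show "minor_rank \<rho> B {} = 0"
    by (simp add: minor_rank_def)
  show "minor_rank \<rho> B X \<le> minor_rank \<rho> B Y" if "X \<subseteq> Y" "Y \<subseteq> E'" for X Y
    using that assms(2,3) pP(3)[of "X \<union> B" "Y \<union> B"] unfolding minor_rank_def by auto
  show "minor_rank \<rho> B (X \<union> Y) + minor_rank \<rho> B (X \<inter> Y) \<le> minor_rank \<rho> B X + minor_rank \<rho> B Y"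
    if "X \<subseteq> E'" "Y \<subseteq> E'" for X Y
  proof -
    have "\<rho> ((X \<union> B) \<union> (Y \<union> B)) + \<rho> ((X \<union> B) \<inter> (Y \<union> B)) \<le> \<rho> (X \<union> B) + \<rho> (Y \<union> B)"
      using that assms(2,3) by (intro pP(4)) auto
    moreover have "(X \<union> B) \<union> (Y \<union> B) = (X \<union> Y) \<union> B" "(X \<union> B) \<inter> (Y \<union> B) = (X \<inter> Y) \<union> B"
      by auto
    ultimately show ?thesis
      unfolding minor_rank_def by simp
  qed
  show "minor_rank \<rho> B {e} \<le> int k" if "e \<in> E'" for e
    using that assms(2,3) k[of e] polymatroid_insert_diminishing[OF P, of "{}" B e] pP(2)
    unfolding minor_rank_def by auto
qed

lemma matroid_rankD:
  assumes "matroid_rank E r"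
  shows "finite E" "\<And>X. X \<subseteq> E \<Longrightarrow> 0 \<le> r X" "\<And>X. X \<subseteq> E \<Longrightarrow> r X \<le> int (card X)"
    "\<And>X Y. X \<subseteq> Y \<Longrightarrow> Y \<subseteq> E \<Longrightarrow> r X \<le> r Y"
    "\<And>X Y. X \<subseteq> E \<Longrightarrow> Y \<subseteq> E \<Longrightarrow> r (X \<union> Y) + r (X \<inter> Y) \<le> r X + r Y"
  using assms unfolding matroid_rank_def by blast+

lemma matroid_rank_imp_polymatroid:
  assumes "matroid_rank E r"
  shows "polymatroid E r"
  using matroid_rankD[OF assms] matroid_rankD(3)[OF assms, of "{}"]
  unfolding polymatroid_def by force

lemma matroid_rank_insert_le:
  assumes "matroid_rank E r" "B \<subseteq> E" "x \<in> E" "x \<notin> B"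
  shows "r B \<le> r (insert x B)" "r (insert x B) \<le> r B + 1"
proof -
  note P = matroid_rank_imp_polymatroid[OF assms(1)]
  show "r B \<le> r (insert x B)"
    using assms by (intro polymatroidD(3)[OF P]) auto
  have "r {x} \<le> 1"
    using matroid_rankD(3)[OF assms(1), of "{x}"] assms(3) by simp
  then show "r (insert x B) \<le> r B + 1"
    using polymatroid_insert_diminishing[OF P, of "{}" B x] polymatroidD(2)[OF P] assms by auto
qed

lemma mono_on_subsets_if_insert_mono:
  fixes g :: "'a set \<Rightarrow> 'b :: order"
  assumes "\<And>X x. X \<subseteq> E \<Longrightarrow> x \<in> E \<Longrightarrow> x \<notin> X \<Longrightarrow> g X \<le> g (insert x X)"
    and "finite E" "X \<subseteq> Y" "Y \<subseteq> E"
  shows "g X \<le> g Y"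
proof -
  have "g X \<le> g (X \<union> S)" if "finite S" "S \<subseteq> Y - X" for S
    using that
  proof (induction S rule: finite_induct)
    case (insert s S)
    then have "g (X \<union> S) \<le> g (insert s (X \<union> S))"
      using assms(3,4) by (intro assms(1)) auto
    with insert show ?case by simp
  qed simp
  moreover have "finite (Y - X)"
    using assms(2,4) finite_subset by blast
  ultimately have "g X \<le> g (X \<union> (Y - X))"
    by blast
  also have "X \<union> (Y - X) = Y"
    using assms(3) by blast
  finally show ?thesis .
qed

lemma diminishing_if_insert_diminishing:
  fixes f :: "'a set \<Rightarrow> int"
  assumes "\<And>X Y x. X \<subseteq> Y \<Longrightarrow> Y \<subseteq> E \<Longrightarrow> x \<in> E \<Longrightarrow> x \<notin> Y \<Longrightarrow>
             f (insert x Y) - f Y \<le> f (insert x X) - f X"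
    and "finite S" "S \<subseteq> E - Y" "X \<subseteq> Y" "Y \<subseteq> E"
  shows "f (Y \<union> S) - f Y \<le> f (X \<union> S) - f X"
  using assms(2,3)
proof (induction S rule: finite_induct)
  case (insert s S)
  then have "f (insert s (Y \<union> S)) - f (Y \<union> S) \<le> f (insert s (X \<union> S)) - f (X \<union> S)"
    using assms(4,5) by (intro assms(1)) auto
  with insert show ?case by simp
qed simp

lemma matroid_rankI_insert:
  fixes f :: "'a set \<Rightarrow> int"
  assumes "finite E" "f {} = 0"
    and step: "\<And>X x. X \<subseteq> E \<Longrightarrow> x \<in> E \<Longrightarrow> x \<notin> X \<Longrightarrow>
                 f (insert x X) = f X \<or> f (insert x X) = f X + 1"
    and diminishing: "\<And>X Y x. X \<subseteq> Y \<Longrightarrow> Y \<subseteq> E \<Longrightarrow> x \<in> E \<Longrightarrow> x \<notin> Y \<Longrightarrow>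
                 f (insert x Y) - f Y \<le> f (insert x X) - f X"
  shows "matroid_rank E f"
  unfolding matroid_rank_def
proof (intro conjI allI impI)
  have bounds: "0 \<le> f X \<and> f X \<le> int (card X)" if "X \<subseteq> E" for X
  proof -
    have "finite X"
      using that assms(1) finite_subset by blast
    then show ?thesis
      using that
    proof (induction X rule: finite_induct)
      case (insert x X)
      then show ?case
        using step[of X x] by auto
    qed (simp add: assms(2))
  qed
  show "0 \<le> f X" "f X \<le> int (card X)" if "X \<subseteq> E" for X
    using bounds[OF that] by auto
  have "f X \<le> f (insert x X)" if "X \<subseteq> E" "x \<in> E" "x \<notin> X" for X x
    using step[OF that] by auto
  then show "f X \<le> f Y" if "X \<subseteq> Y \<and> Y \<subseteq> E" for X Y
    using that mono_on_subsets_if_insert_mono[where g=f, OF _ assms(1)] by blast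
  show "f (X \<union> Y) + f (X \<inter> Y) \<le> f X + f Y" if "X \<subseteq> E \<and> Y \<subseteq> E" for X Y
  proof -
    have "finite (X - Y)"
      using that assms(1) finite_subset by blast
    then have "f (Y \<union> (X - Y)) - f Y \<le> f ((X \<inter> Y) \<union> (X - Y)) - f (X \<inter> Y)"
      using that
      by (intro diminishing_if_insert_diminishing[where f=f, OF diminishing]) auto
    moreover have "Y \<union> (X - Y) = X \<union> Y" "(X \<inter> Y) \<union> (X - Y) = X"
      by auto
    ultimately show ?thesis by simp
  qed
qed (fact assms(1))

section \<open>Quotients\<close>

lemma sum_set_eq_Plus_vimage: "Z = Inl -` Z <+> Inr -` Z"
  by (rule set_eqI) (case_tac x; auto)

lemma min_submodular:
  fixes fU fI fS fT gU gI gS gT :: int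
  assumes "fU + fI \<le> fS + fT" "gU + gI \<le> gS + gT" "fI - gI \<le> fS - gS" "fI - gI \<le> fT - gT"
  shows "min fU gU + min fI gI \<le> min fS gS + min fT gT"
  using assms unfolding min_def by auto

lemma matroid_rank_quotient_extension:
  fixes rQ rL :: "'a set \<Rightarrow> int" and A :: "'b set"
  assumes Q: "matroid_rank E rQ" and L: "matroid_rank E rL" and "finite A"
    and diff_mono: "\<And>X Y. X \<subseteq> Y \<Longrightarrow> Y \<subseteq> E \<Longrightarrow> rL X - rQ X \<le> rL Y - rQ Y"
  shows "matroid_rank (E <+> A)
           (\<lambda>Z. min (rL (Inl -` Z) + int (card (Inr -` Z))) (rQ (Inl -` Z) + int d))"
    (is "matroid_rank _ ?r")
  unfolding matroid_rank_def
proof (intro conjI allI impI)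
  note QD = matroid_rankD[OF Q] and LD = matroid_rankD[OF L]
  have parts: "Inl -` Z \<subseteq> E" "Inr -` Z \<subseteq> A" "finite (Inr -` Z)" if "Z \<subseteq> E <+> A" for Z
  proof -
    show "Inl -` Z \<subseteq> E" "Inr -` Z \<subseteq> A"
      using that by auto
    then show "finite (Inr -` Z)"
      using \<open>finite A\<close> finite_subset by blast
  qed
  show "finite (E <+> A)"
    using LD(1) \<open>finite A\<close> by simp
  show "0 \<le> ?r Z" if "Z \<subseteq> E <+> A" for Z
    using QD(2) LD(2) parts[OF that] by simp
  show "?r Z \<le> int (card Z)" if "Z \<subseteq> E <+> A" for Z
  proof -
    have "finite (Inl -` Z)"
      using parts(1)[OF that] LD(1) finite_subset by blast
    then have "card Z = card (Inl -` Z) + card (Inr -` Z)"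
      using parts(3)[OF that] card_Plus sum_set_eq_Plus_vimage by metis
    then show ?thesis
      using LD(3)[OF parts(1)[OF that]] by simp
  qed
  show "?r Z1 \<le> ?r Z2" if "Z1 \<subseteq> Z2 \<and> Z2 \<subseteq> E <+> A" for Z1 Z2
  proof -
    have "Inl -` Z1 \<subseteq> Inl -` Z2" "Inl -` Z2 \<subseteq> E"
      using that parts(1)[of Z2] by auto
    then have "rL (Inl -` Z1) \<le> rL (Inl -` Z2)" "rQ (Inl -` Z1) \<le> rQ (Inl -` Z2)"
      using QD(4) LD(4) by blast+
    moreover have "card (Inr -` Z1) \<le> card (Inr -` Z2)"
      using that parts(3)[of Z2] by (auto intro: card_mono)
    ultimately show ?thesis by linarith
  qed
  show "?r (S \<union> T) + ?r (S \<inter> T) \<le> ?r S + ?r T" if "S \<subseteq> E <+> A \<and> T \<subseteq> E <+> A" for S T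
  proof -
    have S: "Inl -` S \<subseteq> E" "finite (Inr -` S)" and T: "Inl -` T \<subseteq> E" "finite (Inr -` T)"
      using that parts by auto
    have "card (Inr -` S \<union> Inr -` T) + card (Inr -` S \<inter> Inr -` T) = card (Inr -` S) + card (Inr -` T)"
      using card_Un_Int S(2) T(2) by metis
    moreover have "card (Inr -` S \<inter> Inr -` T) \<le> card (Inr -` S)" "card (Inr -` S \<inter> Inr -` T) \<le> card (Inr -` T)"
      using S(2) T(2) by (auto intro: card_mono)
    moreover have "Inl -` S \<inter> Inl -` T \<subseteq> Inl -` S" "Inl -` S \<inter> Inl -` T \<subseteq> Inl -` T"
      by auto
    ultimately show ?thesis
      unfolding vimage_Un vimage_Int
      using QD(5)[OF S(1) T(1)] LD(5)[OF S(1) T(1)]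
        diff_mono[of "Inl -` S \<inter> Inl -` T" "Inl -` S"] diff_mono[of "Inl -` S \<inter> Inl -` T" "Inl -` T"] S T
      by (intro min_submodular) linarith+
  qed
qed

lemma quotient_diff_mono:
  assumes "quotient E rQ rL" "X \<subseteq> Y" "Y \<subseteq> E"
  shows "rL X - rQ X \<le> rL Y - rQ Y"
proof -
  obtain A :: "nat set" and rM where M: "matroid_rank (Inl ` E \<union> Inr ` A) rM"
    and L: "\<And>X. X \<subseteq> E \<Longrightarrow> rL X = rM (Inl ` X)"
    and Q: "\<And>X. X \<subseteq> E \<Longrightarrow> rQ X = rM (Inl ` X \<union> Inr ` A) - rM (Inr ` A)"
    using assms(1) unfolding quotient_def by blast
  have "rM (Inl ` Y \<union> (Inl ` X \<union> Inr ` A)) + rM (Inl ` Y \<inter> (Inl ` X \<union> Inr ` A))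
        \<le> rM (Inl ` Y) + rM (Inl ` X \<union> Inr ` A)"
    using assms(2,3) by (intro matroid_rankD(5)[OF M]) auto
  moreover have "Inl ` Y \<union> (Inl ` X \<union> Inr ` A) = Inl ` Y \<union> Inr ` A"
    "Inl ` Y \<inter> (Inl ` X \<union> Inr ` A) = Inl ` X"
    using assms(2) by auto
  moreover have "X \<subseteq> E"
    using assms(2,3) by blast
  ultimately show ?thesis
    using L Q assms(3) by simp
qed

lemma quotient_if_diff_mono:
  assumes Q: "matroid_rank E rQ" and L: "matroid_rank E rL"
    and diff_mono: "\<And>X Y. X \<subseteq> Y \<Longrightarrow> Y \<subseteq> E \<Longrightarrow> rL X - rQ X \<le> rL Y - rQ Y"
  shows "quotient E rQ rL"
proof -
  \<comment> \<open>M: add d = r_L(E) - r_Q(E) coloops to L and cap the rank at r_Q + d; deleting the new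
    points gives back L, contracting them gives Q.\<close>
  define d where "d = nat (rL E - rQ E)"
  define rM :: "('a + nat) set \<Rightarrow> int"
    where "rM Z = min (rL (Inl -` Z) + int (card (Inr -` Z))) (rQ (Inl -` Z) + int d)" for Z
  have M: "matroid_rank (E <+> {..<d}) rM"
    unfolding rM_def using matroid_rank_quotient_extension[OF Q L finite_lessThan diff_mono] .
  have empty: "rL {} = 0" "rQ {} = 0"
    using matroid_rankD(2,3)[OF L, of "{}"] matroid_rankD(2,3)[OF Q, of "{}"] by auto
  have gap: "0 \<le> rL X - rQ X" "rL X - rQ X \<le> int d" if "X \<subseteq> E" for X
    using that diff_mono[of "{}" X] diff_mono[of X E] diff_mono[of "{}" E] empty
    unfolding d_def by auto
  have [simp]: "Inl -` Inl ` X = X" "Inr -` Inl ` X = {}" "Inl -` Inr ` B = {}" "Inr -` Inr ` B = B"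
    for X :: "'a set" and B :: "nat set"
    by auto
  have "rL X = rM (Inl ` X)" if "X \<subseteq> E" for X
    using gap[OF that] unfolding rM_def by simp
  moreover have "rQ X = rM (Inl ` X \<union> Inr ` {..<d}) - rM (Inr ` {..<d})" if "X \<subseteq> E" for X
    using gap[OF that] empty unfolding rM_def by simp
  moreover have "matroid_rank (Inl ` E \<union> Inr ` {..<d}) rM"
    using M by (simp add: Plus_def)
  ultimately show "quotient E rQ rL"
    unfolding quotient_def using Q L finite_lessThan by blast
qed

lemma quotient_chain_diff_mono:
  assumes chain: "\<forall>i\<in>{1..k-1}. quotient E (M (Suc i)) (M i)"
    and "1 \<le> i" "i \<le> j" "j \<le> k" "X \<subseteq> Y" "Y \<subseteq> E"
  shows "M i X - M j X \<le> M i Y - M j Y"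
  using \<open>i \<le> j\<close> \<open>j \<le> k\<close>
proof (induction j rule: dec_induct)
  case (step j)
  then have "M j X - M (Suc j) X \<le> M j Y - M (Suc j) Y"
    using chain \<open>1 \<le> i\<close> \<open>X \<subseteq> Y\<close> \<open>Y \<subseteq> E\<close> by (auto intro: quotient_diff_mono)
  with step show ?case by simp
qed simp

section \<open>A characterization of Q_k\<close>

definition unequal_pairs_modular :: "'a set \<Rightarrow> ('a set \<Rightarrow> int) \<Rightarrow> bool" where
  "unequal_pairs_modular E \<rho> \<longleftrightarrow> (\<forall>B e f. B \<subseteq> E \<and> e \<in> E \<and> f \<in> E \<and> e \<notin> B \<and> f \<notin> B \<and> e \<noteq> f
      \<and> \<rho> (insert e B) \<noteq> \<rho> (insert f B)
      \<longrightarrow> \<rho> (insert e (insert f B)) + \<rho> B = \<rho> (insert e B) + \<rho> (insert f B))"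

lemma unequal_pairs_modularD:
  assumes "unequal_pairs_modular E \<rho>" "B \<subseteq> E" "e \<in> E" "f \<in> E" "e \<notin> B" "f \<notin> B" "e \<noteq> f"
    "\<rho> (insert e B) \<noteq> \<rho> (insert f B)"
  shows "\<rho> (insert e (insert f B)) + \<rho> B = \<rho> (insert e B) + \<rho> (insert f B)"
  using assms unfolding unequal_pairs_modular_def by blast

lemma quotient_chain_equal_marginals:
  assumes M: "\<forall>i\<in>{1..k}. matroid_rank E (M i)" and chain: "\<forall>i\<in>{1..k-1}. quotient E (M (Suc i)) (M i)"
    and B: "B \<subseteq> E" and e: "e \<in> E" "e \<notin> B" and f: "f \<in> E" "f \<notin> B" and "e \<noteq> f"
    and j: "j \<in> {1..k}"
    and not_modular: "M j (insert e (insert f B)) + M j B \<noteq> M j (insert e B) + M j (insert f B)"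
    and i: "i \<in> {1..k}"
  shows "M i (insert e B) = M i (insert f B)"
proof -
  define m where "m l x = M l (insert x B) - M l B" for l x
  define n where "n l = M l (insert e (insert f B)) - M l B" for l
  have sets: "insert e B \<subseteq> E" "insert f B \<subseteq> E" "insert e (insert f B) \<subseteq> E"
    using B e f by auto
  have bounds: "0 \<le> m l e" "m l e \<le> 1" "0 \<le> m l f" "m l f \<le> 1"
    "m l e \<le> n l" "m l f \<le> n l" "n l \<le> m l e + m l f" if "l \<in> {1..k}" for l
  proof -
    have Ml: "matroid_rank E (M l)"
      using M that by blast
    note P = matroid_rank_imp_polymatroid[OF Ml]
    show "0 \<le> m l e" "m l e \<le> 1" "0 \<le> m l f" "m l f \<le> 1"
      using matroid_rank_insert_le[OF Ml B e] matroid_rank_insert_le[OF Ml B f]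
      unfolding m_def by linarith+
    show "m l e \<le> n l" "m l f \<le> n l"
      using polymatroidD(3)[OF P insert_mono[OF subset_insertI] sets(3)]
        polymatroidD(3)[OF P subset_insertI sets(3)]
      unfolding m_def n_def by linarith+
    show "n l \<le> m l e + m l f"
      using polymatroid_insert_diminishing[OF P subset_insertI sets(2) e(1)] e(2) \<open>e \<noteq> f\<close>
      unfolding m_def n_def by auto
  qed
  have antimono: "m l' e \<le> m l e" "m l' f \<le> m l f" "n l' - m l' e \<le> n l - m l e" "n l' - m l' f \<le> n l - m l f"
    if ll': "1 \<le> l" "l \<le> l'" "l' \<le> k" for l l'
  proof -
    have "M l X - M l' X \<le> M l Y - M l' Y" if "X \<subseteq> Y" "Y \<subseteq> E" for X Y
      using quotient_chain_diff_mono[OF chain ll' that] .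
    from this[OF subset_insertI sets(1)] this[OF subset_insertI sets(2)]
      this[OF insert_mono[OF subset_insertI] sets(3)] this[OF subset_insertI sets(3)]
    show "m l' e \<le> m l e" "m l' f \<le> m l f" "n l' - m l' e \<le> n l - m l e" "n l' - m l' f \<le> n l - m l f"
      unfolding m_def n_def by auto
  qed
  \<comment> \<open>Layer j is not modular only if both marginals are 1 and the pair is parallel there; the
    marginals stay 1 in earlier layers, and the pair stays parallel in later ones.\<close>
  have "m j e = 1" "m j f = 1" "n j = 1"
    using bounds[OF j] not_modular unfolding m_def n_def by linarith+
  then have "m i e = m i f"
    using bounds[OF i] antimono[of i j] antimono[of j i] i j by (cases "i \<le> j") auto
  then show ?thesis
    unfolding m_def by simp
qed

lemma in_Qk_imp_unequal_pairs_modular: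
  assumes "in_Qk k E \<rho>"
  shows "unequal_pairs_modular E \<rho>"
  unfolding unequal_pairs_modular_def
proof (intro allI impI, elim conjE)
  fix B e f
  assume B: "B \<subseteq> E" and e: "e \<in> E" "e \<notin> B" and f: "f \<in> E" "f \<notin> B" and "e \<noteq> f"
    and unequal: "\<rho> (insert e B) \<noteq> \<rho> (insert f B)"
  obtain M where M: "\<forall>i\<in>{1..k}. matroid_rank E (M i)"
    and chain: "\<forall>i\<in>{1..k-1}. quotient E (M (Suc i)) (M i)"
    and sum_all: "\<forall>X. X \<subseteq> E \<longrightarrow> \<rho> X = (\<Sum>i=1..k. M i X)"
    using assms unfolding in_Qk_def by blast
  note sum = sum_all[rule_format]
  have sets: "insert e B \<subseteq> E" "insert f B \<subseteq> E" "insert e (insert f B) \<subseteq> E"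
    using B e f by auto
  show "\<rho> (insert e (insert f B)) + \<rho> B = \<rho> (insert e B) + \<rho> (insert f B)"
  proof (rule ccontr)
    assume "\<rho> (insert e (insert f B)) + \<rho> B \<noteq> \<rho> (insert e B) + \<rho> (insert f B)"
    then have "(\<Sum>i=1..k. M i (insert e (insert f B)) + M i B - M i (insert e B) - M i (insert f B)) \<noteq> 0"
      using sum[OF sets(3)] sum[OF B] sum[OF sets(1)] sum[OF sets(2)]
      by (simp add: sum_subtractf sum.distrib)
    then obtain j where "j \<in> {1..k}"
      and "M j (insert e (insert f B)) + M j B \<noteq> M j (insert e B) + M j (insert f B)"
      by (rule sum.not_neutral_contains_not_neutral) simp
    then have "M i (insert e B) = M i (insert f B)" if "i \<in> {1..k}" for i
      using quotient_chain_equal_marginals[OF M chain B e f \<open>e \<noteq> f\<close> _ _ that] by blast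
    then have "\<rho> (insert e B) = \<rho> (insert f B)"
      using sum[OF sets(1)] sum[OF sets(2)] by simp
    with unequal show False ..
  qed
qed

text \<open>The i-th matroid of the decomposition: build X up one element at a time (in an order fixed
  by Hilbert choice) and count the elements whose marginal rank is at least i.\<close>
function layer_rank :: "('a set \<Rightarrow> int) \<Rightarrow> nat \<Rightarrow> 'a set \<Rightarrow> int" where
  "layer_rank \<rho> i X = (if finite X \<and> X \<noteq> {} then
      layer_rank \<rho> i (X - {SOME x. x \<in> X})
        + (if int i \<le> \<rho> X - \<rho> (X - {SOME x. x \<in> X}) then 1 else 0)
    else 0)"
  by pat_completeness auto
termination
proof (relation "measure (\<lambda>(_, _, X). card X)")
  fix \<rho> :: "'a set \<Rightarrow> int" and i :: nat and X :: "'a set"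
  assume "finite X \<and> X \<noteq> {}"
  then have "card (X - {SOME x. x \<in> X}) < card X"
    by (intro card_Diff1_less) (auto simp: some_in_eq)
  then show "((\<rho>, i, X - {SOME x. x \<in> X}), \<rho>, i, X) \<in> measure (\<lambda>(_, _, X). card X)"
    by simp
qed auto

declare layer_rank.simps [simp del]

lemma layer_rank_empty [simp]: "layer_rank \<rho> i {} = 0"
  by (simp add: layer_rank.simps)

lemma layer_rank_remove:
  assumes "unequal_pairs_modular E \<rho>" "finite X" "X \<subseteq> E" "x \<in> X"
  shows "layer_rank \<rho> i X = layer_rank \<rho> i (X - {x}) + (if int i \<le> \<rho> X - \<rho> (X - {x}) then 1 else 0)"
  using assms(2-4)
proof (induction "card X" arbitrary: X x rule: less_induct)
  case less
  define y where "y = (SOME x. x \<in> X)"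
  have "y \<in> X"
    unfolding y_def using less.prems(3) by (auto simp: some_in_eq)
  have y_step: "layer_rank \<rho> i X = layer_rank \<rho> i (X - {y}) + (if int i \<le> \<rho> X - \<rho> (X - {y}) then 1 else 0)"
    using less.prems by (subst layer_rank.simps) (auto simp: y_def[symmetric])
  show ?case
  proof (cases "x = y")
    case False
    define B where "B = X - {x, y}"
    have B: "X - {y} = insert x B" "X - {x} = insert y B" "X = insert x (insert y B)"
      "X - {y} - {x} = B" "X - {x} - {y} = B"
      using False \<open>y \<in> X\<close> less.prems(3) unfolding B_def by auto
    have "finite (X - {y})" "X - {y} \<subseteq> E" "x \<in> X - {y}"
      using less.prems False by auto
    from less.hyps[OF card_Diff1_less[OF less.prems(1) \<open>y \<in> X\<close>] this]
    have x_then_y: "layer_rank \<rho> i (X - {y}) = layer_rank \<rho> i B + (if int i \<le> \<rho> (X - {y}) - \<rho> B then 1 else 0)"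
      unfolding B(4) .
    have "finite (X - {x})" "X - {x} \<subseteq> E" "y \<in> X - {x}"
      using less.prems False \<open>y \<in> X\<close> by auto
    from less.hyps[OF card_Diff1_less[OF less.prems(1) less.prems(3)] this]
    have y_then_x: "layer_rank \<rho> i (X - {x}) = layer_rank \<rho> i B + (if int i \<le> \<rho> (X - {x}) - \<rho> B then 1 else 0)"
      unfolding B(5) .
    \<comment> \<open>If the two single-element extensions of B differ in rank, the pair is modular over B,
      so the two orders see the same two marginals, swapped.\<close>
    have "B \<subseteq> E" "x \<in> E" "y \<in> E" "x \<notin> B" "y \<notin> B"
      using less.prems(2,3) \<open>y \<in> X\<close> unfolding B_def by auto
    from unequal_pairs_modularD[OF assms(1) this False]
    have "\<rho> (X - {y}) \<noteq> \<rho> (X - {x}) \<Longrightarrow> \<rho> X + \<rho> B = \<rho> (X - {y}) + \<rho> (X - {x})"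
      unfolding B(1,2) B(3)[symmetric] .
    then have "(if int i \<le> \<rho> X - \<rho> (X - {y}) then 1 else 0) + (if int i \<le> \<rho> (X - {y}) - \<rho> B then 1 else 0)
      = (if int i \<le> \<rho> X - \<rho> (X - {x}) then 1 else (0::int)) + (if int i \<le> \<rho> (X - {x}) - \<rho> B then 1 else 0)"
      by (cases "\<rho> (X - {y}) = \<rho> (X - {x})") auto
    then show ?thesis
      using y_step x_then_y y_then_x by simp
  qed (use y_step in simp)
qed

lemma layer_rank_insert:
  assumes "unequal_pairs_modular E \<rho>" "finite E" "X \<subseteq> E" "x \<in> E" "x \<notin> X"
  shows "layer_rank \<rho> i (insert x X)
           = layer_rank \<rho> i X + (if int i \<le> \<rho> (insert x X) - \<rho> X then 1 else 0)"
proof -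
  have "finite (insert x X)" "insert x X \<subseteq> E"
    using assms(2-4) finite_subset by auto
  from layer_rank_remove[OF assms(1) this insertI1] show ?thesis
    using assms(5) by simp
qed

lemma layer_rank_matroid:
  assumes "polymatroid E \<rho>" "unequal_pairs_modular E \<rho>"
  shows "matroid_rank E (layer_rank \<rho> i)"
proof (rule matroid_rankI_insert)
  note insert = layer_rank_insert[OF assms(2) polymatroidD(1)[OF assms(1)]]
  show "finite E"
    using polymatroidD(1)[OF assms(1)] .
  show "layer_rank \<rho> i {} = 0"
    by simp
  show "layer_rank \<rho> i (insert x X) = layer_rank \<rho> i X \<or> layer_rank \<rho> i (insert x X) = layer_rank \<rho> i X + 1"
    if "X \<subseteq> E" "x \<in> E" "x \<notin> X" for X x
    using insert[OF that] by auto
  show "layer_rank \<rho> i (insert x Y) - layer_rank \<rho> i Y \<le> layer_rank \<rho> i (insert x X) - layer_rank \<rho> i X"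
    if "X \<subseteq> Y" "Y \<subseteq> E" "x \<in> E" "x \<notin> Y" for X Y x
  proof -
    have "X \<subseteq> E" "x \<notin> X"
      using that by auto
    then show ?thesis
      using insert[OF that(2-4)] insert[OF \<open>X \<subseteq> E\<close> that(3) \<open>x \<notin> X\<close>]
        polymatroid_insert_diminishing[OF assms(1) that] by auto
  qed
qed

lemma layer_rank_quotient:
  assumes "polymatroid E \<rho>" "unequal_pairs_modular E \<rho>"
  shows "quotient E (layer_rank \<rho> (Suc i)) (layer_rank \<rho> i)"
proof (rule quotient_if_diff_mono[OF layer_rank_matroid[OF assms] layer_rank_matroid[OF assms]])
  note insert = layer_rank_insert[OF assms(2) polymatroidD(1)[OF assms(1)]]
  fix X Y
  assume "X \<subseteq> Y" "Y \<subseteq> E"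
  show "layer_rank \<rho> i X - layer_rank \<rho> (Suc i) X \<le> layer_rank \<rho> i Y - layer_rank \<rho> (Suc i) Y"
  proof (rule mono_on_subsets_if_insert_mono[where g="\<lambda>X. layer_rank \<rho> i X - layer_rank \<rho> (Suc i) X",
        OF _ polymatroidD(1)[OF assms(1)] \<open>X \<subseteq> Y\<close> \<open>Y \<subseteq> E\<close>])
    fix Z z
    assume "Z \<subseteq> E" "z \<in> E" "z \<notin> Z"
    then show "layer_rank \<rho> i Z - layer_rank \<rho> (Suc i) Z
        \<le> layer_rank \<rho> i (insert z Z) - layer_rank \<rho> (Suc i) (insert z Z)"
      using insert[of Z z i] insert[of Z z "Suc i"] by auto
  qed
qed

lemma sum_threshold_indicator:
  assumes "0 \<le> d"
  shows "(\<Sum>i=1..k. if int i \<le> d then 1 else 0 :: int) = min (int k) d"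
  using assms by (induction k) auto

lemma sum_layer_rank:
  assumes "k_polymatroid k E \<rho>" "unequal_pairs_modular E \<rho>" "X \<subseteq> E"
  shows "\<rho> X = (\<Sum>i=1..k. layer_rank \<rho> i X)"
proof -
  have P: "polymatroid E \<rho>" and k: "\<And>e. e \<in> E \<Longrightarrow> \<rho> {e} \<le> int k"
    using assms(1) unfolding k_polymatroid_def by auto
  have "finite X"
    using assms(3) polymatroidD(1)[OF P] finite_subset by blast
  then show ?thesis
    using assms(3)
  proof (induction X rule: finite_induct)
    case empty
    then show ?case
      using polymatroidD(2)[OF P] by simp
  next
    case (insert x X)
    define d where "d = \<rho> (insert x X) - \<rho> X"
    \<comment> \<open>The marginal d is at most rho {x} \<le> k, so the layers 1, ..., k count it exactly.\<close>
    have "0 \<le> d" "d \<le> int k"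
      using polymatroidD(3)[OF P, of X "insert x X"] polymatroid_insert_diminishing[OF P, of "{}" X x]
        polymatroidD(2)[OF P] k[of x] insert unfolding d_def by auto
    have "(\<Sum>i=1..k. layer_rank \<rho> i (insert x X))
        = (\<Sum>i=1..k. layer_rank \<rho> i X) + (\<Sum>i=1..k. if int i \<le> d then 1 else 0)"
      using layer_rank_insert[OF assms(2) polymatroidD(1)[OF P], of X x] insert
      unfolding d_def by (simp add: sum.distrib)
    also have "\<dots> = \<rho> X + d"
      using insert sum_threshold_indicator[OF \<open>0 \<le> d\<close>, of k] \<open>d \<le> int k\<close> by simp
    finally show ?case
      unfolding d_def by simp
  qed
qed

lemma unequal_pairs_modular_imp_in_Qk:
  assumes "k_polymatroid k E \<rho>" "unequal_pairs_modular E \<rho>"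
  shows "in_Qk k E \<rho>"
proof -
  have P: "polymatroid E \<rho>"
    using assms(1) unfolding k_polymatroid_def by blast
  show ?thesis
    unfolding in_Qk_def
    using layer_rank_matroid[OF P assms(2)] layer_rank_quotient[OF P assms(2)] sum_layer_rank[OF assms]
    by blast
qed

theorem in_Qk_iff_unequal_pairs_modular:
  assumes "k_polymatroid k E \<rho>"
  shows "in_Qk k E \<rho> \<longleftrightarrow> unequal_pairs_modular E \<rho>"
  using assms in_Qk_imp_unequal_pairs_modular unequal_pairs_modular_imp_in_Qk by blast

section \<open>Two-element polymatroids\<close>

lemma subset_pair_cases:
  assumes "X \<subseteq> {e, f}"
  shows "X = {} \<or> X = {e} \<or> X = {f} \<or> X = {e, f}"
  using assms by (cases "e \<in> X"; cases "f \<in> X") auto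

lemma k_polymatroid_pair_iff:
  assumes "e \<noteq> f"
  shows "k_polymatroid k {e, f} \<rho> \<longleftrightarrow>
           \<rho> {} = 0 \<and> 0 \<le> \<rho> {e} \<and> 0 \<le> \<rho> {f} \<and> \<rho> {e} \<le> \<rho> {e, f} \<and> \<rho> {f} \<le> \<rho> {e, f}
           \<and> \<rho> {e, f} \<le> \<rho> {e} + \<rho> {f} \<and> \<rho> {e} \<le> int k \<and> \<rho> {f} \<le> int k"
    (is "_ \<longleftrightarrow> ?rank")
proof
  assume "k_polymatroid k {e, f} \<rho>"
  then have P: "polymatroid {e, f} \<rho>" and "\<rho> {e} \<le> int k" "\<rho> {f} \<le> int k"
    unfolding k_polymatroid_def by auto
  moreover have "\<rho> ({e} \<union> {f}) + \<rho> ({e} \<inter> {f}) \<le> \<rho> {e} + \<rho> {f}"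
    by (rule polymatroidD(4)[OF P]) auto
  moreover have "{e} \<union> {f} = {e, f}" "{e} \<inter> {f} = {}"
    using assms by auto
  ultimately show ?rank
    using polymatroidD(2)[OF P] polymatroidD(3)[OF P, of "{}" "{e}"] polymatroidD(3)[OF P, of "{}" "{f}"]
      polymatroidD(3)[OF P, of "{e}" "{e, f}"] polymatroidD(3)[OF P, of "{f}" "{e, f}"]
    by auto
next
  assume rank: ?rank
  show "k_polymatroid k {e, f} \<rho>"
  proof (rule k_polymatroidI)
    show "\<rho> X \<le> \<rho> Y" if "X \<subseteq> Y" "Y \<subseteq> {e, f}" for X Y
      using subset_pair_cases[OF subset_trans[OF that]] subset_pair_cases[OF that(2)] that(1) assms rank
      by (elim disjE) (auto simp: insert_commute)
    show "\<rho> (X \<union> Y) + \<rho> (X \<inter> Y) \<le> \<rho> X + \<rho> Y" if "X \<subseteq> {e, f}" "Y \<subseteq> {e, f}" for X Y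
      using subset_pair_cases[OF that(1)] subset_pair_cases[OF that(2)] assms rank
      by (elim disjE) (auto simp: insert_commute)
  qed (use rank in auto)
qed

lemma rhoA_simps [simp]:
  "rhoA a b c {} = 0" "rhoA a b c {True} = int b" "rhoA a b c {False} = int c"
  "rhoA a b c {True, False} = int a + int c" "rhoA a b c {False, True} = int a + int c"
  unfolding rhoA_def by auto

lemma poly_iso_rhoA_iff:
  "poly_iso E \<rho> (UNIV :: bool set) (rhoA a b c) \<longleftrightarrow>
     (\<exists>e f. e \<noteq> f \<and> E = {e, f} \<and> \<rho> {} = 0 \<and> \<rho> {e} = int b \<and> \<rho> {f} = int c \<and> \<rho> {e, f} = int a + int c)"
proof
  assume "poly_iso E \<rho> UNIV (rhoA a b c)"
  then obtain \<phi> where inj: "inj_on \<phi> E" and onto: "\<phi> ` E = UNIV"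
    and iso: "\<And>X. X \<subseteq> E \<Longrightarrow> \<rho> X = rhoA a b c (\<phi> ` X)"
    unfolding poly_iso_def bij_betw_def by blast
  obtain e f where e: "e \<in> E" "\<phi> e" and f: "f \<in> E" "\<not> \<phi> f"
    using onto by (metis UNIV_I imageE)
  have "E = {e, f}"
  proof -
    have "x = e \<or> x = f" if "x \<in> E" for x
      using inj_onD[OF inj _ that e(1)] inj_onD[OF inj _ that f(1)] e(2) f(2) by blast
    then show ?thesis
      using e(1) f(1) by blast
  qed
  moreover have "e \<noteq> f"
    using e(2) f(2) by blast
  moreover have "\<rho> {} = 0" "\<rho> {e} = int b" "\<rho> {f} = int c" "\<rho> {e, f} = int a + int c"
    using iso[of "{}"] iso[of "{e}"] iso[of "{f}"] iso[of "{e, f}"] e f by auto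
  ultimately show "\<exists>e f. e \<noteq> f \<and> E = {e, f} \<and> \<rho> {} = 0 \<and> \<rho> {e} = int b \<and> \<rho> {f} = int c
                     \<and> \<rho> {e, f} = int a + int c"
    by blast
next
  assume "\<exists>e f. e \<noteq> f \<and> E = {e, f} \<and> \<rho> {} = 0 \<and> \<rho> {e} = int b \<and> \<rho> {f} = int c
                \<and> \<rho> {e, f} = int a + int c"
  then obtain e f where "e \<noteq> f" "E = {e, f}" and rank: "\<rho> {} = 0" "\<rho> {e} = int b" "\<rho> {f} = int c"
      "\<rho> {e, f} = int a + int c"
    by blast
  have "bij_betw (\<lambda>x. x = e) E UNIV"
    using \<open>e \<noteq> f\<close> unfolding \<open>E = {e, f}\<close> bij_betw_def inj_on_def by (auto simp: image_iff)
  moreover have "\<rho> X = rhoA a b c ((\<lambda>x. x = e) ` X)" if "X \<subseteq> E" for X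
    using subset_pair_cases[OF that[unfolded \<open>E = {e, f}\<close>]] \<open>e \<noteq> f\<close> rank
    by (elim disjE) simp_all
  ultimately show "poly_iso E \<rho> UNIV (rhoA a b c)"
    unfolding poly_iso_def by blast
qed

lemma rhoA_iso_eq:
  assumes "a < b" "b < c" "a' < b'" "b' < c'"
    and "poly_iso (UNIV :: bool set) (rhoA a b c) (UNIV :: bool set) (rhoA a' b' c')"
  shows "(a, b, c) = (a', b', c')"
proof -
  obtain e f where "e \<noteq> f" and rank: "rhoA a b c {e} = int b'" "rhoA a b c {f} = int c'"
      "rhoA a b c {e, f} = int a' + int c'"
    using assms(5) unfolding poly_iso_rhoA_iff by blast
  show ?thesis
  proof (cases e)
    case True
    with \<open>e \<noteq> f\<close> have "\<not> f"
      by simp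
    with True rank show ?thesis
      by simp
  next
    case False
    \<comment> \<open>Then the ranks b, c of the two points would be c', b', contradicting b < c and b' < c'.\<close>
    with \<open>e \<noteq> f\<close> have f
      by simp
    with False rank assms(1-4) show ?thesis
      by simp
  qed
qed

lemma k_polymatroid_pair_iso_rhoA:
  assumes "e \<noteq> f" "k_polymatroid k {e, f} \<rho>" "\<rho> {e} < \<rho> {f}" "\<rho> {e, f} < \<rho> {e} + \<rho> {f}"
  shows "\<exists>a b c. a < b \<and> b < c \<and> c \<le> k \<and> poly_iso {e, f} \<rho> UNIV (rhoA a b c)"
proof -
  have rank: "\<rho> {} = 0" "0 \<le> \<rho> {e}" "\<rho> {f} \<le> \<rho> {e, f}" "\<rho> {f} \<le> int k"
    using assms(2) unfolding k_polymatroid_pair_iff[OF assms(1)] by auto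
  define a b c where "a = nat (\<rho> {e, f} - \<rho> {f})" and "b = nat (\<rho> {e})" and "c = nat (\<rho> {f})"
  have "poly_iso {e, f} \<rho> UNIV (rhoA a b c)"
    unfolding poly_iso_rhoA_iff a_def b_def c_def
    using assms(1,3) rank by (intro exI[of _ e] exI[of _ f]) auto
  moreover have "a < b" "b < c" "c \<le> k"
    unfolding a_def b_def c_def using assms(3,4) rank by auto
  ultimately show ?thesis
    by blast
qed

section \<open>Excluded minors\<close>

lemma excluded_minor_Qk_pair:
  assumes "excluded_minor_Qk k E \<rho>"
  obtains e f where "e \<noteq> f" "E = {e, f}" "\<rho> {e} \<noteq> \<rho> {f}" "\<rho> {e, f} \<noteq> \<rho> {e} + \<rho> {f}"
proof -
  have kpoly: "k_polymatroid k E \<rho>" and "\<not> in_Qk k E \<rho>"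
    and minors: "\<And>A B. A \<subseteq> E \<Longrightarrow> B \<subseteq> E \<Longrightarrow> A \<inter> B = {} \<Longrightarrow> A \<union> B \<noteq> {} \<Longrightarrow>
                   in_Qk k (E - (A \<union> B)) (minor_rank \<rho> B)"
    using assms unfolding excluded_minor_Qk_def by blast+
  then obtain B e f where B: "B \<subseteq> E" "e \<in> E" "f \<in> E" "e \<notin> B" "f \<notin> B" "e \<noteq> f"
    and unequal: "\<rho> (insert e B) \<noteq> \<rho> (insert f B)"
    and not_modular: "\<rho> (insert e (insert f B)) + \<rho> B \<noteq> \<rho> (insert e B) + \<rho> (insert f B)"
    unfolding in_Qk_iff_unequal_pairs_modular[OF kpoly] unequal_pairs_modular_def by blast
  \<comment> \<open>Deleting everything outside B + e + f and contracting B leaves a minor that still violates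
    the condition at e, f; by minimality it is not proper.\<close>
  have "B = {} \<and> E = {e, f}"
  proof (rule ccontr)
    define A where "A = E - {e, f} - B"
    assume "\<not> (B = {} \<and> E = {e, f})"
    then have "A \<union> B \<noteq> {}"
      using B unfolding A_def by auto
    then have "in_Qk k (E - (A \<union> B)) (minor_rank \<rho> B)"
      using minors[of A B] B(1) unfolding A_def by blast
    moreover have "E - (A \<union> B) = {e, f}"
      using B unfolding A_def by auto
    ultimately have "unequal_pairs_modular {e, f} (minor_rank \<rho> B)"
      using in_Qk_imp_unequal_pairs_modular by metis
    from unequal_pairs_modularD[OF this, of "{}" e f] show False
      using unequal not_modular B(6) unfolding minor_rank_def by auto
  qed
  then show thesis
    using that[OF B(6)] unequal not_modular kpoly unfolding k_polymatroid_def polymatroid_def by auto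
qed

lemma excluded_minor_Qk_imp_iso_rhoA:
  assumes "excluded_minor_Qk k E \<rho>"
  shows "\<exists>a b c. a < b \<and> b < c \<and> c \<le> k \<and> poly_iso E \<rho> UNIV (rhoA a b c)"
proof -
  obtain e f where "e \<noteq> f" "E = {e, f}" and unequal: "\<rho> {e} \<noteq> \<rho> {f}"
    and not_modular: "\<rho> {e, f} \<noteq> \<rho> {e} + \<rho> {f}"
    using excluded_minor_Qk_pair[OF assms] by blast
  have kpoly: "k_polymatroid k {e, f} \<rho>"
    using assms \<open>E = {e, f}\<close> unfolding excluded_minor_Qk_def by blast
  then have strict: "\<rho> {e, f} < \<rho> {e} + \<rho> {f}"
    using not_modular unfolding k_polymatroid_pair_iff[OF \<open>e \<noteq> f\<close>] by auto
  consider "\<rho> {e} < \<rho> {f}" | "\<rho> {f} < \<rho> {e}"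
    using unequal by linarith
  then show ?thesis
  proof cases
    case 1
    then show ?thesis
      using k_polymatroid_pair_iso_rhoA[OF \<open>e \<noteq> f\<close> kpoly 1 strict] \<open>E = {e, f}\<close> by simp
  next
    case 2
    have "{f, e} = {e, f}"
      by blast
    with kpoly strict have "k_polymatroid k {f, e} \<rho>" "\<rho> {f, e} < \<rho> {f} + \<rho> {e}"
      by simp_all
    from k_polymatroid_pair_iso_rhoA[OF \<open>e \<noteq> f\<close>[symmetric] this(1) 2 this(2)] show ?thesis
      using \<open>E = {e, f}\<close> \<open>{f, e} = {e, f}\<close> by simp
  qed
qed

lemma iso_rhoA_imp_excluded_minor_Qk:
  assumes "a < b" "b < c" "c \<le> k" "poly_iso E \<rho> UNIV (rhoA a b c)"
  shows "excluded_minor_Qk k E \<rho>"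
proof -
  obtain e f where "e \<noteq> f" "E = {e, f}" and rank: "\<rho> {} = 0" "\<rho> {e} = int b" "\<rho> {f} = int c"
      "\<rho> {e, f} = int a + int c"
    using assms(4) unfolding poly_iso_rhoA_iff by blast
  have kpoly: "k_polymatroid k E \<rho>"
    unfolding \<open>E = {e, f}\<close> k_polymatroid_pair_iff[OF \<open>e \<noteq> f\<close>] using rank assms(1-3) by auto
  have "\<not> unequal_pairs_modular E \<rho>"
    using unequal_pairs_modularD[of E \<rho> "{}" e f] \<open>e \<noteq> f\<close> \<open>E = {e, f}\<close> rank assms(1,2) by auto
  then have "\<not> in_Qk k E \<rho>"
    using in_Qk_imp_unequal_pairs_modular by blast
  moreover have "in_Qk k (E - (A \<union> B)) (minor_rank \<rho> B)"
    if "A \<subseteq> E" "B \<subseteq> E" "A \<inter> B = {}" "A \<union> B \<noteq> {}" for A B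
  proof (rule unequal_pairs_modular_imp_in_Qk)
    show "k_polymatroid k (E - (A \<union> B)) (minor_rank \<rho> B)"
      using k_polymatroid_minor_rank[OF kpoly \<open>B \<subseteq> E\<close>] by blast
    have "x = y" if "x \<in> E - (A \<union> B)" "y \<in> E - (A \<union> B)" for x y
      using that \<open>A \<union> B \<noteq> {}\<close> \<open>A \<subseteq> E\<close> \<open>B \<subseteq> E\<close> unfolding \<open>E = {e, f}\<close> by blast
    then show "unequal_pairs_modular (E - (A \<union> B)) (minor_rank \<rho> B)"
      unfolding unequal_pairs_modular_def by blast
  qed
  ultimately show ?thesis
    unfolding excluded_minor_Qk_def using kpoly by blast
qed

lemma sorted_list_of_set_triple:
  fixes a b c :: "'a :: linorder"
  assumes "a < b" "b < c"
  shows "sorted_list_of_set {a, b, c} = [a, b, c]"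
  using assms by (subst sorted_list_of_set_unique[symmetric]) (auto simp: card_insert_if)

lemma card_increasing_triples: "card {(a, b, c). (a :: nat) < b \<and> b < c \<and> c \<le> k} = (k + 1) choose 3"
proof -
  let ?T = "{(a, b, c). (a :: nat) < b \<and> b < c \<and> c \<le> k}"
  let ?set = "\<lambda>(a, b, c). {a, b, c}"
  have "inj_on ?set ?T"
    by (rule inj_onI) (auto dest!: arg_cong[where f = sorted_list_of_set] simp: sorted_list_of_set_triple)
  moreover have "?set ` ?T = {S. S \<subseteq> {0..k} \<and> card S = 3}"
  proof (intro equalityI subsetI)
    fix S
    assume "S \<in> ?set ` ?T"
    then show "S \<in> {S. S \<subseteq> {0..k} \<and> card S = 3}"
      by (auto simp: card_insert_if)
  next
    fix S
    assume S: "S \<in> {S. S \<subseteq> {0..k} \<and> card S = 3}"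
    then have "finite S"
      using finite_subset by blast
    define xs where "xs = sorted_list_of_set S"
    have "length xs = 3"
      using S \<open>finite S\<close> unfolding xs_def by simp
    then obtain a b c where "xs = [a, b, c]"
      by (auto simp: numeral_3_eq_3 length_Suc_conv)
    then have "a < b" "b < c" "S = {a, b, c}"
      using set_sorted_list_of_set[OF \<open>finite S\<close>] strict_sorted_list_of_set[of S] unfolding xs_def by auto
    then show "S \<in> ?set ` ?T"
      using S by (auto intro!: image_eqI[where x = "(a, b, c)"])
  qed
  ultimately have "card ?T = card {S. S \<subseteq> {0..k} \<and> card S = 3}"
    using card_image by fastforce
  also have "\<dots> = (k + 1) choose 3"
    by (subst n_subsets) auto
  finally show ?thesis .
qed

lemma excluded_minor_Qk_iff_iso_rhoA:
  "excluded_minor_Qk k E \<rho> \<longleftrightarrow> (\<exists>a b c. a < b \<and> b < c \<and> c \<le> k \<and> poly_iso E \<rho> UNIV (rhoA a b c))"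
  using excluded_minor_Qk_imp_iso_rhoA iso_rhoA_imp_excluded_minor_Qk by blast

theorem theorem5p2:
  fixes k :: nat and E :: "'a set" and \<rho> :: "'a set \<Rightarrow> int"
  assumes "k \<ge> 2"
  shows "(excluded_minor_Qk k E \<rho> \<longleftrightarrow>
            (\<exists>a b c. a < b \<and> b < c \<and> c \<le> k \<and> poly_iso E \<rho> (UNIV :: bool set) (rhoA a b c)))
       \<and> (\<forall>a b c a' b' c'. a < b \<and> b < c \<and> c \<le> k \<and> a' < b' \<and> b' < c' \<and> c' \<le> k
             \<and> poly_iso (UNIV :: bool set) (rhoA a b c) (UNIV :: bool set) (rhoA a' b' c')
             \<longrightarrow> (a, b, c) = (a', b', c'))
       \<and> card {(a, b, c). a < b \<and> b < c \<and> c \<le> k} = (k + 1) choose 3"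
proof -
  show ?thesis
    unfolding excluded_minor_Qk_iff_iso_rhoA card_increasing_triples using rhoA_iso_eq by blast
qed

end
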